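(* Let $\kappa=(\kappa_1,\dots,\kappa_n)\in\Gamma_k$ with $\kappa_1\geq\kappa_2\geq\dots\geq\kappa_n$, and let $A>0$ with $\kappa_n>-A$. Let $C_0=C(\sigma_k,n,A)$ be a constant such that $\kappa_k<C_0$ (a constant depending only on $n$, $k$, $A$ and an upper bound for $\sigma_k(\kappa)$, valid for all such $\kappa$). Let $N>\max\{1,C_0\}$. If $\kappa_1\geq N^{2^{k-1}}$, then there exists $1\leq l\leq k-1$ such that $\kappa_l\geq M^2$ and $\kappa_{l+1}\leq M$, where $M=N^{2^{k-l-1}}$.
   Context: $\sigma_m(\kappa)$ is the $m$-th elementary symmetric polynomial on $\mathbb{R}^n$, and $\Gamma_k=\{\kappa\in\mathbb{R}^n:\sigma_j(\kappa)>0\text{ for all }1\leq j\leq k\}$ is the Gårding cone. *)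

theory Defs
  imports Complex_Main
begin

text \<open>Vectors in R^n are functions nat => real, with components at indices 1..n.\<close>

definition esym :: "nat \<Rightarrow> nat \<Rightarrow> (nat \<Rightarrow> real) \<Rightarrow> real" where
  "esym n m \<kappa> = (\<Sum>S\<in>{S. S \<subseteq> {1..n} \<and> card S = m}. \<Prod>i\<in>S. \<kappa> i)"

definition garding_cone :: "nat \<Rightarrow> nat \<Rightarrow> (nat \<Rightarrow> real) set" where
  "garding_cone n k = {\<kappa>. \<forall>j\<in>{1..k}. esym n j \<kappa> > 0}"

definition admissible :: "nat \<Rightarrow> nat \<Rightarrow> real \<Rightarrow> real \<Rightarrow> (nat \<Rightarrow> real) \<Rightarrow> bool" where
  "admissible n k A S \<kappa> \<longleftrightarrow> \<kappa> \<in> garding_cone n k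
     \<and> (\<forall>i j. 1 \<le> i \<and> i \<le> j \<and> j \<le> n \<longrightarrow> \<kappa> j \<le> \<kappa> i)
     \<and> \<kappa> n > - A \<and> esym n k \<kappa> \<le> S"

end

theory Submission
  imports Defs
begin

text \<open>If no index \<open>l\<close> works, the lower bound \<open>\<kappa> l \<ge> N^(2^(k-l))\<close>, true for
  \<open>l = 1\<close>, propagates from \<open>l\<close> to \<open>l + 1\<close>, because \<open>N^(2^(k-l))\<close> is the square of
  \<open>N^(2^(k-l-1))\<close>. At \<open>l = k\<close> it gives \<open>\<kappa> k \<ge> N\<close>, contradicting \<open>\<kappa> k < C0 < N\<close>.
  So the statement is a pigeonhole argument on the sequence \<open>\<kappa> 1, \<dots>, \<kappa> k\<close>; the
  cone condition enters only through the constant \<open>C0\<close>.\<close>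

lemma power_two_power_Suc: "(x::'a::monoid_mult) ^ 2 ^ Suc m = (x ^ 2 ^ m)\<^sup>2"
  by (metis power_Suc2 power_mult)

lemma doubling_bound_propagates:
  fixes a :: "nat \<Rightarrow> 'a::{monoid_mult, linorder}"
  assumes no_drop: "\<And>l. 1 \<le> l \<Longrightarrow> l < k \<Longrightarrow> a l \<ge> (N ^ 2 ^ (k - l - 1))\<^sup>2 \<Longrightarrow>
      a (l + 1) > N ^ 2 ^ (k - l - 1)"
    and first: "a 1 \<ge> N ^ 2 ^ (k - 1)"
    and "1 \<le> j" "j \<le> k"
  shows "a j \<ge> N ^ 2 ^ (k - j)"
  using \<open>1 \<le> j\<close> \<open>j \<le> k\<close>
proof (induction j rule: dec_induct)
  case base
  then show ?case using first by simp
next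
  case (step l)
  define m where "m = k - (l + 1)"
  have "k - l = Suc m" using step.prems by (simp add: m_def)
  then have "a l \<ge> (N ^ 2 ^ m)\<^sup>2"
    using step.IH step.prems by (simp only: power_two_power_Suc)
  then have "a (l + 1) > N ^ 2 ^ m"
    using no_drop[of l] step.hyps step.prems by (simp add: m_def)
  then show ?case by (simp add: m_def less_imp_le)
qed

lemma exists_drop_below_doubling_powers:
  fixes a :: "nat \<Rightarrow> 'a::{monoid_mult, linorder}"
  assumes "1 \<le> k" "a 1 \<ge> N ^ 2 ^ (k - 1)" "a k < N"
  shows "\<exists>l. 1 \<le> l \<and> l \<le> k - 1 \<and>
           a l \<ge> (N ^ 2 ^ (k - l - 1))\<^sup>2 \<and> a (l + 1) \<le> N ^ 2 ^ (k - l - 1)"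
proof (rule ccontr)
  assume no_l: "\<not> ?thesis"
  have "a k \<ge> N ^ 2 ^ (k - k)"
  proof (rule doubling_bound_propagates)
    fix l assume l: "1 \<le> l" "l < k" "a l \<ge> (N ^ 2 ^ (k - l - 1))\<^sup>2"
    have "\<not> (1 \<le> l \<and> l \<le> k - 1 \<and>
        a l \<ge> (N ^ 2 ^ (k - l - 1))\<^sup>2 \<and> a (l + 1) \<le> N ^ 2 ^ (k - l - 1))"
      using no_l by blast
    then show "a (l + 1) > N ^ 2 ^ (k - l - 1)" using l by (auto simp: not_le dest: leD)
  qed (use assms in auto)
  then show False using \<open>a k < N\<close> by simp
qed

theorem proposition2p15:
  fixes n k :: nat and A S C0 N :: real and \<kappa> :: "nat \<Rightarrow> real"
  assumes "1 \<le> k" "k \<le> n" "A > 0"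
    and C0: "\<forall>\<kappa>'. admissible n k A S \<kappa>' \<longrightarrow> \<kappa>' k < C0"
    and adm: "admissible n k A S \<kappa>"
    and N: "N > max 1 C0"
    and big: "\<kappa> 1 \<ge> N ^ (2 ^ (k - 1))"
  shows "\<exists>l. 1 \<le> l \<and> l \<le> k - 1 \<and>
           \<kappa> l \<ge> (N ^ (2 ^ (k - l - 1)))\<^sup>2 \<and> \<kappa> (l + 1) \<le> N ^ (2 ^ (k - l - 1))"
proof -
  have "\<kappa> k < N" using C0 adm N by force
  then show ?thesis using exists_drop_below_doubling_powers \<open>1 \<le> k\<close> big by blast
qed

end
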